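(* Let $n,m\ge 2$ and suppose $\gamma_{2t}(K_n\Box K_m)<2\min\{n,m\}$. Let $S$ be any total $2$-dominating set of $K_n\Box K_m$ with $|S|=\gamma_{2t}(K_n\Box K_m)$. Then: (1) for every $v\in V(K_n)$, $S\cap(\{v\}\times V(K_m))\neq\emptyset$, and for every $w\in V(K_m)$, $S\cap(V(K_n)\times\{w\})\neq\emptyset$; (2) there exists $v\in V(K_n)$ with $|S\cap(\{v\}\times V(K_m))|\ge 3$, and there exists $w\in V(K_m)$ with $|S\cap(V(K_n)\times\{w\})|\ge 3$.
   Context: For a graph $G=(V,E)$, a set $S\subseteq V$ is a total $2$-dominating set if every vertex of $V$ (including those in $S$) is adjacent to at least $2$ vertices of $S$; $\gamma_{2t}(G)$ is the minimum cardinality of such a set. $G\Box H$ denotes the Cartesian product: vertex set $V(G)\times V(H)$, with $(u_1,v_1)\sim(u_2,v_2)$ iff either $u_1=u_2$ and $v_1\sim v_2$, or $v_1=v_2$ and $u_1\sim u_2$. $K_n$ is the complete graph on $n$ vertices; $V(K_n)=\{v_1,\dots,v_n\}$, $V(K_m)=\{w_1,\dots,w_m\}$. *)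

theory Defs
  imports Main
begin

text \<open>A graph is given by a vertex set V and a (symmetric, irreflexive) adjacency relation adj.\<close>

definition total_k_dominating :: "nat \<Rightarrow> 'a set \<Rightarrow> ('a \<Rightarrow> 'a \<Rightarrow> bool) \<Rightarrow> 'a set \<Rightarrow> bool" where
  "total_k_dominating k V adj S \<longleftrightarrow>
     S \<subseteq> V \<and> (\<forall>x\<in>V. card {y\<in>S. adj x y} \<ge> k)"

definition gamma_2t :: "'a set \<Rightarrow> ('a \<Rightarrow> 'a \<Rightarrow> bool) \<Rightarrow> nat" where
  "gamma_2t V adj = (LEAST c. \<exists>S. finite S \<and> total_k_dominating 2 V adj S \<and> card S = c)"

definition Kn_verts :: "nat \<Rightarrow> nat set" where "Kn_verts n = {0..<n}"
definition Kn_adj :: "nat \<Rightarrow> nat \<Rightarrow> bool" where "Kn_adj x y \<longleftrightarrow> x \<noteq> y"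

definition cart_verts :: "'a set \<Rightarrow> 'b set \<Rightarrow> ('a \<times> 'b) set" where
  "cart_verts V W = V \<times> W"
definition cart_adj :: "('a \<Rightarrow> 'a \<Rightarrow> bool) \<Rightarrow> ('b \<Rightarrow> 'b \<Rightarrow> bool) \<Rightarrow> 'a \<times> 'b \<Rightarrow> 'a \<times> 'b \<Rightarrow> bool" where
  "cart_adj adjG adjH p q \<longleftrightarrow>
     (fst p = fst q \<and> adjH (snd p) (snd q)) \<or> (snd p = snd q \<and> adjG (fst p) (fst q))"

end

theory Submission
  imports Defs
begin

text \<open>Every vertex (v,w) of \<open>K\<^sub>n \<box> K\<^sub>m\<close> sees only the other vertices of S in its row v and
  its column w. If a row of S is empty, every column must therefore contain two vertices of S;
  if all columns are met and every row has at most two vertices of S, the same follows, since the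
  vertex of S in a column has at most one S-neighbour in its row. Either way
  \<open>|S| \<ge> 2m\<close>, contradicting \<open>|S| < 2 min {n, m}\<close>. The column statements follow by transposition.\<close>

abbreviation rook_adj :: "nat \<times> nat \<Rightarrow> nat \<times> nat \<Rightarrow> bool" where
  "rook_adj \<equiv> cart_adj Kn_adj Kn_adj"

lemma total_k_dominating_cart_swap:
  assumes "total_k_dominating k (V \<times> W) (cart_adj A B) S"
  shows "total_k_dominating k (W \<times> V) (cart_adj B A) (prod.swap ` S)"
  unfolding total_k_dominating_def
proof (intro conjI ballI)
  show "prod.swap ` S \<subseteq> W \<times> V"
    using assms by (auto simp: total_k_dominating_def)
next
  fix x assume "x \<in> W \<times> V"
  then have "k \<le> card {y\<in>S. cart_adj A B (prod.swap x) y}"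
    using assms by (auto simp: total_k_dominating_def)
  also have "{y\<in>S. cart_adj A B (prod.swap x) y} = prod.swap ` {y\<in>prod.swap ` S. cart_adj B A x y}"
    by (force simp: cart_adj_def)
  also have "card \<dots> = card {y\<in>prod.swap ` S. cart_adj B A x y}"
    by (rule card_image[OF inj_swap])
  finally show "k \<le> card {y\<in>prod.swap ` S. cart_adj B A x y}" .
qed

lemma swap_row_eq_column: "prod.swap ` S \<inter> ({w} \<times> V) = prod.swap ` (S \<inter> (V \<times> {w}))"
  by auto

lemma swap_column_eq_row: "prod.swap ` S \<inter> (W \<times> {v}) = prod.swap ` (S \<inter> ({v} \<times> W))"
  by auto

lemma card_swap_row: "card (prod.swap ` S \<inter> ({w} \<times> V)) = card (S \<inter> (V \<times> {w}))"
  unfolding swap_row_eq_column by (rule card_image[OF inj_swap])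

lemma card_eq_sum_card_columns:
  assumes "S \<subseteq> V \<times> W" "finite S" "finite W"
  shows "card S = (\<Sum>w\<in>W. card (S \<inter> (V \<times> {w})))"
proof -
  have "S = (\<Union>w\<in>W. S \<inter> (V \<times> {w}))" using assms(1) by auto
  also have "card \<dots> = (\<Sum>w\<in>W. card (S \<inter> (V \<times> {w})))"
    using assms(2,3) by (intro card_UN_disjoint) auto
  finally show ?thesis .
qed

lemma twice_card_le_if_columns_ge_2:
  assumes "S \<subseteq> V \<times> W" "finite S" "finite W"
    and "\<And>w. w \<in> W \<Longrightarrow> 2 \<le> card (S \<inter> (V \<times> {w}))"
  shows "2 * card W \<le> card S"
proof -
  have "2 * card W = (\<Sum>w\<in>W. 2)" by simp
  also have "\<dots> \<le> (\<Sum>w\<in>W. card (S \<inter> (V \<times> {w})))" by (rule sum_mono) (rule assms(4))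
  finally show ?thesis using card_eq_sum_card_columns[OF assms(1-3)] by simp
qed

lemma card_rook_neighbours_le:
  assumes "finite S" "S \<subseteq> V \<times> W"
  shows "card {y\<in>S. rook_adj (a, b) y}
     \<le> card (S \<inter> ({a} \<times> W) - {(a, b)}) + card (S \<inter> (V \<times> {b}) - {(a, b)})"
proof -
  have "{y\<in>S. rook_adj (a, b) y} \<subseteq> (S \<inter> ({a} \<times> W) - {(a, b)}) \<union> (S \<inter> (V \<times> {b}) - {(a, b)})"
    using assms(2) by (auto simp: cart_adj_def Kn_adj_def)
  then have "card {y\<in>S. rook_adj (a, b) y}
      \<le> card ((S \<inter> ({a} \<times> W) - {(a, b)}) \<union> (S \<inter> (V \<times> {b}) - {(a, b)}))"
    using assms(1) by (intro card_mono) auto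
  also have "\<dots> \<le> card (S \<inter> ({a} \<times> W) - {(a, b)}) + card (S \<inter> (V \<times> {b}) - {(a, b)})"
    by (rule card_Un_le)
  finally show ?thesis .
qed

lemma rook_total_2_dominating_rows_nonempty:
  assumes dom: "total_k_dominating 2 (V \<times> W) rook_adj S"
    and "finite V" "finite W" "card S < 2 * card W" "v \<in> V"
  shows "S \<inter> ({v} \<times> W) \<noteq> {}"
proof
  assume empty_row: "S \<inter> ({v} \<times> W) = {}"
  have sub: "S \<subseteq> V \<times> W" using dom by (simp add: total_k_dominating_def)
  have fin: "finite S" using sub assms(2,3) finite_subset by blast
  have "2 \<le> card (S \<inter> (V \<times> {w}))" if "w \<in> W" for w
  proof -
    have "2 \<le> card {y\<in>S. rook_adj (v, w) y}"
      using dom \<open>v \<in> V\<close> that by (auto simp: total_k_dominating_def)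
    also have "\<dots> \<le> card (S \<inter> (V \<times> {w}) - {(v, w)})"
      using card_rook_neighbours_le[OF fin sub, of v w] empty_row by simp
    also have "\<dots> \<le> card (S \<inter> (V \<times> {w}))"
      using fin by (intro card_mono) auto
    finally show ?thesis .
  qed
  then show False
    using twice_card_le_if_columns_ge_2[OF sub fin \<open>finite W\<close>] assms(4) by simp
qed

lemma rook_total_2_dominating_row_card_ge_3:
  assumes dom: "total_k_dominating 2 (V \<times> W) rook_adj S"
    and "finite V" "finite W" "card S < 2 * card W"
    and columns: "\<And>w. w \<in> W \<Longrightarrow> S \<inter> (V \<times> {w}) \<noteq> {}"
  shows "\<exists>v\<in>V. 3 \<le> card (S \<inter> ({v} \<times> W))"
proof (rule ccontr)
  assume "\<not> ?thesis"
  then have small_rows: "card (S \<inter> ({v} \<times> W)) \<le> 2" if "v \<in> V" for v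
    using that by force
  have sub: "S \<subseteq> V \<times> W" using dom by (simp add: total_k_dominating_def)
  have fin: "finite S" using sub assms(2,3) finite_subset by blast
  have "2 \<le> card (S \<inter> (V \<times> {w}))" if w: "w \<in> W" for w
  proof -
    obtain v where v: "v \<in> V" "(v, w) \<in> S" using columns[OF w] by blast
    have "card (S \<inter> ({v} \<times> W) - {(v, w)}) \<le> 1"
      using small_rows[OF v(1)] v(2) w fin by simp
    moreover have "2 \<le> card {y\<in>S. rook_adj (v, w) y}"
      using dom v(1) w by (auto simp: total_k_dominating_def)
    moreover have "card (S \<inter> (V \<times> {w}) - {(v, w)}) = card (S \<inter> (V \<times> {w})) - 1"
      using v fin by simp
    ultimately show ?thesis
      using card_rook_neighbours_le[OF fin sub, of v w] by linarith
  qed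
  then show False
    using twice_card_le_if_columns_ge_2[OF sub fin \<open>finite W\<close>] assms(4) by simp
qed

lemma rook_total_2_dominating_columns_nonempty:
  assumes "total_k_dominating 2 (V \<times> W) rook_adj S"
    and "finite V" "finite W" "card S < 2 * card V" "w \<in> W"
  shows "S \<inter> (V \<times> {w}) \<noteq> {}"
proof -
  have "card (prod.swap ` S) = card S" by (rule card_image[OF inj_swap])
  then have "prod.swap ` S \<inter> ({w} \<times> V) \<noteq> {}"
    using assms by (intro rook_total_2_dominating_rows_nonempty total_k_dominating_cart_swap) auto
  then show ?thesis by auto
qed

lemma rook_total_2_dominating_column_card_ge_3:
  assumes "total_k_dominating 2 (V \<times> W) rook_adj S"
    and "finite V" "finite W" "card S < 2 * card V"
    and "\<And>v. v \<in> V \<Longrightarrow> S \<inter> ({v} \<times> W) \<noteq> {}"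
  shows "\<exists>w\<in>W. 3 \<le> card (S \<inter> (V \<times> {w}))"
proof -
  have "card (prod.swap ` S) = card S" by (rule card_image[OF inj_swap])
  then have "\<exists>w\<in>W. 3 \<le> card (prod.swap ` S \<inter> ({w} \<times> V))"
    using assms by (intro rook_total_2_dominating_row_card_ge_3 total_k_dominating_cart_swap)
      (auto simp: swap_column_eq_row)
  then show ?thesis by (simp add: card_swap_row)
qed

theorem lemma3:
  fixes n m :: nat and S :: "(nat \<times> nat) set"
  assumes "n \<ge> 2" and "m \<ge> 2"
    and "gamma_2t (cart_verts (Kn_verts n) (Kn_verts m)) (cart_adj Kn_adj Kn_adj) < 2 * min n m"
    and "total_k_dominating 2 (cart_verts (Kn_verts n) (Kn_verts m)) (cart_adj Kn_adj Kn_adj) S"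
    and "finite S"
    and "card S = gamma_2t (cart_verts (Kn_verts n) (Kn_verts m)) (cart_adj Kn_adj Kn_adj)"
  shows "(\<forall>v\<in>Kn_verts n. S \<inter> ({v} \<times> Kn_verts m) \<noteq> {})
       \<and> (\<forall>w\<in>Kn_verts m. S \<inter> (Kn_verts n \<times> {w}) \<noteq> {})
       \<and> (\<exists>v\<in>Kn_verts n. card (S \<inter> ({v} \<times> Kn_verts m)) \<ge> 3)
       \<and> (\<exists>w\<in>Kn_verts m. card (S \<inter> (Kn_verts n \<times> {w})) \<ge> 3)"
proof -
  let ?V = "Kn_verts n" and ?W = "Kn_verts m"
  have dom: "total_k_dominating 2 (?V \<times> ?W) rook_adj S"
    using assms(4) by (simp add: cart_verts_def)
  have fin: "finite ?V" "finite ?W" by (simp_all add: Kn_verts_def)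
  have small: "card S < 2 * card ?V" "card S < 2 * card ?W"
    using assms(3,6) by (simp_all add: Kn_verts_def)
  have rows: "\<forall>v\<in>?V. S \<inter> ({v} \<times> ?W) \<noteq> {}"
    using rook_total_2_dominating_rows_nonempty[OF dom fin small(2)] by blast
  have columns: "\<forall>w\<in>?W. S \<inter> (?V \<times> {w}) \<noteq> {}"
    using rook_total_2_dominating_columns_nonempty[OF dom fin small(1)] by blast
  show ?thesis
    using rows columns
      rook_total_2_dominating_row_card_ge_3[OF dom fin small(2)]
      rook_total_2_dominating_column_card_ge_3[OF dom fin small(1)]
    by auto
qed

end
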